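(* Suppose the embedding uses one-time data encoding: $\rho_\theta(x)=U(\theta)S(x)|0\rangle\langle0|S(x)^\dagger U(\theta)^\dagger$ where $U(\theta)=\prod_{l=1}^L U_l(\theta_l)$ is unitary and $S(x)$ is a unitary encoding gate. Let $\kappa(x)=S(x)|0\rangle\langle0|S(x)^\dagger$. Then for $\mathcal A\in\{\mathcal S,\mathcal T\}$, $$\mathfrak R^{\mathcal A}_{\Theta,\mathcal M}\le\mathrm{Tr}\Bigl(\sqrt{\mathbb E_{x\sim p^{\mathcal A}(x)}[\kappa(x)^2]}\Bigr).$$
   Context: $\mathcal X$ finite, labels $c\in\{0,1\}$, $\Theta$ a parameter set, $\mathcal M$ the set of binary POVMs $M=(M_0,M_1)$ on $\mathbb C^n$ ($M_0,M_1\succeq0$, $M_0+M_1=I$), loss $\ell_{\theta,M}(c,x)=1-\mathrm{Tr}(M_c\rho_\theta(x))$. For task $\mathcal A$ with distribution $p^{\mathcal A}(c,x)$ (input marginal $p^{\mathcal A}(x)$) and sample size $N^{\mathcal A}$, let $(c_j,x_j)$ be i.i.d. from $p^{\mathcal A}$ and $\sigma_j$ i.i.d. uniform on $\{\pm1\}$ independent of data; $$\mathfrak R^{\mathcal A}_{\Theta,\mathcal M}=\mathbb E\Bigl[\sup_{\theta\in\Theta,M\in\mathcal M}\sum_{j=1}^{N^{\mathcal A}}\frac{\sigma_j\ell_{\theta,M}(c_j,x_j)}{\sqrt{N^{\mathcal A}}}\Bigr].$$ *)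

theory Defs
  imports "HOL-Analysis.Analysis" "HOL-Probability.Probability"
begin

type_synonym 'n cmat = "complex ^ 'n ^ 'n"

definition cadj :: "'n::finite cmat \<Rightarrow> 'n cmat" where
  "cadj A = (\<chi> i j. cnj (A $ j $ i))"

definition ctrace :: "'n::finite cmat \<Rightarrow> complex" where
  "ctrace A = (\<Sum>i\<in>UNIV. A $ i $ i)"

definition unitary :: "'n::finite cmat \<Rightarrow> bool" where
  "unitary U \<longleftrightarrow> cadj U ** U = mat 1 \<and> U ** cadj U = mat 1"

definition psd :: "'n::finite cmat \<Rightarrow> bool" where
  "psd A \<longleftrightarrow> cadj A = A \<and>
     (\<forall>v :: complex ^ 'n. 0 \<le> Re (\<Sum>i\<in>UNIV. cnj (v $ i) * (A *v v) $ i))"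

definition msqrt :: "'n::finite cmat \<Rightarrow> 'n cmat" where
  "msqrt A = (THE B. psd B \<and> B ** B = A)"

definition binary_povms :: "(nat \<Rightarrow> 'n::finite cmat) set" where
  "binary_povms = {M. psd (M 0) \<and> psd (M 1) \<and> M 0 + M 1 = mat 1}"

text \<open>The projector |0><0| onto the reference basis state with index i0.\<close>
definition proj0 :: "'n::finite \<Rightarrow> 'n cmat" where
  "proj0 i0 = (\<chi> i j. if i = i0 \<and> j = i0 then 1 else 0)"

definition kappa :: "'n::finite \<Rightarrow> ('x \<Rightarrow> 'n cmat) \<Rightarrow> 'x \<Rightarrow> 'n cmat" where
  "kappa i0 S x = S x ** proj0 i0 ** cadj (S x)"

definition layer_prod :: "nat \<Rightarrow> (nat \<Rightarrow> 'p \<Rightarrow> 'n::finite cmat) \<Rightarrow> (nat \<Rightarrow> 'p) \<Rightarrow> 'n cmat" where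
  "layer_prod L Ul \<theta> = foldr (\<lambda>l acc. Ul l (\<theta> l) ** acc) [1..<Suc L] (mat 1)"

definition loss :: "('t \<Rightarrow> 'x \<Rightarrow> 'n::finite cmat) \<Rightarrow> 't \<Rightarrow> (nat \<Rightarrow> 'n cmat) \<Rightarrow> nat \<times> 'x \<Rightarrow> real" where
  "loss \<rho> \<theta> M cx = 1 - Re (ctrace (M (fst cx) ** \<rho> \<theta> (snd cx)))"

definition rademacher ::
  "nat \<Rightarrow> (nat \<times> 'x) pmf \<Rightarrow> 't set \<Rightarrow> ('t \<Rightarrow> 'x \<Rightarrow> 'n::finite cmat) \<Rightarrow> real" where
  "rademacher N p \<Theta> \<rho> =
     measure_pmf.expectation
       (pair_pmf (Pi_pmf {..<N} undefined (\<lambda>_. p))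
                 (Pi_pmf {..<N} 1 (\<lambda>_. pmf_of_set {-1, 1::real})))
       (\<lambda>(D, \<sigma>). SUP tm \<in> \<Theta> \<times> binary_povms.
          (\<Sum>j<N. \<sigma> j * loss \<rho> (fst tm) (snd tm) (D j)) / sqrt (real N))"

end

theory Submission
  imports Defs
begin

text \<open>
  Write \<open>t(c) = \<plusminus>1\<close> for the sign of a label and \<open>K = \<Sum>\<^sub>j \<sigma>\<^sub>j t(c\<^sub>j) \<kappa>(x\<^sub>j)\<close>. Since every
  \<open>\<rho>\<^sub>\<theta>(x)\<close> has unit trace, the signed loss sum equals a term independent of \<open>(\<theta>, M)\<close> plus
  \<open>Re Tr (P K)\<close> with \<open>P = U(\<theta>)\<^sup>\<dagger> M\<^sub>0 U(\<theta>)\<close> and \<open>0 \<le> P \<le> I\<close>. Entrywise AM-GM in an eigenbasis of a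
  positive definite \<open>B\<close> gives \<open>Re Tr (P K) \<le> (Tr B + Tr (B\<^sup>-\<^sup>1 K\<^sup>2)) / 2\<close> uniformly in \<open>(\<theta>, M)\<close>.
  Averaging over the independent signs removes the cross terms of \<open>K\<^sup>2\<close>, so
  \<open>E Tr (B\<^sup>-\<^sup>1 K\<^sup>2) = N Tr (B\<^sup>-\<^sup>1 E[\<kappa>\<^sup>2])\<close>; with \<open>B\<close> scaled by \<open>\<surd>N\<close> the Rademacher complexity is at most
  \<open>(Tr B + Tr (B\<^sup>-\<^sup>1 E[\<kappa>\<^sup>2])) / 2\<close>, and letting \<open>B\<close> tend to \<open>\<surd>E[\<kappa>\<^sup>2]\<close> gives the claim.
\<close>

section \<open>Adjoints, traces and unitary matrices\<close>

lemma cadj_nth [simp]: "cadj A $ i $ j = cnj (A $ j $ i)"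
  by (simp add: cadj_def)

lemma cadj_cadj [simp]: "cadj (cadj A) = A"
  by (simp add: vec_eq_iff)

lemma cadj_mult: "cadj (A ** B) = cadj B ** cadj A"
  by (simp add: vec_eq_iff matrix_matrix_mult_def mult.commute)

lemma cadj_add: "cadj (A + B) = cadj A + cadj B"
  by (simp add: vec_eq_iff)

lemma cadj_diff: "cadj (A - B) = cadj A - cadj B"
  by (simp add: vec_eq_iff)

lemma cadj_scaleR: "cadj (r *\<^sub>R A) = r *\<^sub>R cadj A"
  by (simp add: vec_eq_iff)

lemma cadj_sum: "cadj (\<Sum>x\<in>X. f x) = (\<Sum>x\<in>X. cadj (f x))"
  by (induction X rule: infinite_finite_induct) (auto simp: cadj_add vec_eq_iff)

lemma mat_nth: "mat c $ i $ j = (if i = j then c else 0)"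
  by (simp add: mat_def)

lemma cadj_mat: "cadj (mat c) = mat (cnj c)"
  by (simp add: vec_eq_iff mat_def)

lemma cadj_unitary_conj: "cadj (V ** A ** cadj V) = V ** cadj A ** cadj V"
  by (simp add: cadj_mult matrix_mul_assoc)

lemma ctrace_add: "ctrace (A + B) = ctrace A + ctrace B"
  by (simp add: ctrace_def sum.distrib)

lemma ctrace_diff: "ctrace (A - B) = ctrace A - ctrace B"
  by (simp add: ctrace_def sum_subtractf)

lemma ctrace_scaleR: "ctrace (r *\<^sub>R A) = of_real r * ctrace A"
  unfolding ctrace_def by (simp add: sum_distrib_left) (simp add: scaleR_conv_of_real)

lemma ctrace_sum: "ctrace (\<Sum>x\<in>X. f x) = (\<Sum>x\<in>X. ctrace (f x))"
  by (induction X rule: infinite_finite_induct) (auto simp: ctrace_add ctrace_def sum.distrib)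

lemma ctrace_mat_1: "ctrace (mat 1 :: 'n::finite cmat) = of_nat CARD('n)"
  by (simp add: ctrace_def mat_def)

lemma ctrace_mult_eq_sum: "ctrace (A ** B) = (\<Sum>l\<in>UNIV. \<Sum>k\<in>UNIV. A $ k $ l * B $ l $ k)"
  unfolding ctrace_def matrix_matrix_mult_def by simp (rule sum.swap)

lemma ctrace_mult_commute: "ctrace (A ** B) = ctrace (B ** A)"
  unfolding ctrace_mult_eq_sum by (subst sum.swap) (simp add: mult.commute)

lemma matrix_add_rdistrib: "(B + C) ** A = B ** A + C ** A"
  by (simp add: vec_eq_iff matrix_matrix_mult_def sum.distrib[symmetric] algebra_simps)

lemma matrix_diff_ldistrib: "(A :: 'n::finite cmat) ** (B - C) = A ** B - A ** C"
  by (simp add: vec_eq_iff matrix_matrix_mult_def sum_subtractf[symmetric] algebra_simps)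

lemma matrix_diff_rdistrib: "(B - C) ** (A :: 'n::finite cmat) = B ** A - C ** A"
  by (simp add: vec_eq_iff matrix_matrix_mult_def sum_subtractf[symmetric] algebra_simps)

lemma matrix_sum_rdistrib: "(\<Sum>x\<in>X. f x) ** B = (\<Sum>x\<in>X. f x ** B)"
  by (induction X rule: infinite_finite_induct) (auto simp: matrix_add_rdistrib)

lemma matrix_sum_ldistrib: "B ** (\<Sum>x\<in>X. f x) = (\<Sum>x\<in>X. B ** f x)"
  by (induction X rule: infinite_finite_induct) (auto simp: matrix_add_ldistrib)

lemma unitary_simps:
  assumes "unitary U"
  shows "cadj U ** U = mat 1" "U ** cadj U = mat 1"
    "X ** cadj U ** U = X" "X ** U ** cadj U = X"
  using assms unfolding unitary_def by (auto simp: matrix_mul_assoc[symmetric])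

lemma unitary_if_left_inverse: "cadj U ** U = mat 1 \<Longrightarrow> unitary U"
  unfolding unitary_def using matrix_left_right_inverse by blast

lemma unitary_mult: "unitary U \<Longrightarrow> unitary V \<Longrightarrow> unitary (U ** V)"
  by (rule unitary_if_left_inverse) (simp add: cadj_mult matrix_mul_assoc unitary_simps)

lemma unitary_mat_1: "unitary (mat 1)"
  by (simp add: unitary_def cadj_mat)

lemma unitary_layer_prod: "(\<And>l a. unitary (Ul l a)) \<Longrightarrow> unitary (layer_prod L Ul \<theta>)"
proof -
  assume Ul: "\<And>l a. unitary (Ul l a)"
  have "unitary (foldr (\<lambda>l acc. Ul l (\<theta> l) ** acc) ls (mat 1))" for ls
    by (induction ls) (simp_all add: unitary_mat_1 unitary_mult Ul)
  then show ?thesis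
    unfolding layer_prod_def .
qed

lemma ctrace_unitary_conj: "unitary U \<Longrightarrow> ctrace (U ** A ** cadj U) = ctrace A"
  by (metis ctrace_mult_commute matrix_mul_assoc matrix_mul_lid unitary_simps(1))

lemma ctrace_unitary_conj': "unitary U \<Longrightarrow> ctrace (cadj U ** A ** U) = ctrace A"
  by (metis cadj_cadj ctrace_unitary_conj unitary_def)

section \<open>The inner product and positive semidefinite matrices\<close>

definition cinner :: "complex ^ 'n::finite \<Rightarrow> complex ^ 'n \<Rightarrow> complex" where
  "cinner u v = (\<Sum>i\<in>UNIV. cnj (u $ i) * v $ i)"

lemma cinner_adjoint: "cinner u (A *v v) = cinner (cadj A *v u) v"
  unfolding cinner_def matrix_vector_mult_def
  by (simp add: sum_distrib_left sum_distrib_right mult_ac) (rule sum.swap)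

lemma cnj_cinner: "cnj (cinner u v) = cinner v u"
  by (simp add: cinner_def mult.commute)

lemma cinner_add_right: "cinner u (v + w) = cinner u v + cinner u w"
  by (simp add: cinner_def sum.distrib distrib_left)

lemma cinner_add_left: "cinner (v + w) u = cinner v u + cinner w u"
  by (simp add: cinner_def sum.distrib distrib_right)

lemma cinner_diff_right: "cinner u (v - w) = cinner u v - cinner u w"
  by (simp add: cinner_def sum_subtractf right_diff_distrib)

lemma cinner_scale_right: "cinner u (c *s v) = c * cinner u v"
  by (simp add: cinner_def sum_distrib_left mult_ac)

lemma cinner_scale_left: "cinner (c *s u) v = cnj c * cinner u v"
  by (simp add: cinner_def sum_distrib_left mult_ac)

lemma matrix_vector_mult_scale: "(A :: 'n::finite cmat) *v (c *s v) = c *s (A *v v)"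
  by (simp add: vec_eq_iff matrix_vector_mult_def sum_distrib_left mult_ac)

lemma mat_vector_mult: "mat c *v (v :: complex ^ 'n::finite) = c *s v"
  by (simp add: vec_eq_iff matrix_vector_mult_def mat_def if_distrib if_distribR cong: if_cong)

lemma cinner_sum_right: "cinner u (\<Sum>x\<in>X. f x) = (\<Sum>x\<in>X. cinner u (f x))"
  unfolding cinner_def by (simp add: sum_distrib_left sum_component) (rule sum.swap)

lemma cnj_mult_self: "cnj z * z = of_real ((cmod z)\<^sup>2)"
  by (metis complex_norm_square mult.commute)

lemma mult_cnj_self: "z * cnj z = of_real ((cmod z)\<^sup>2)"
  by (metis complex_norm_square)

lemma cinner_zero_right [simp]: "cinner u 0 = 0"
  by (simp add: cinner_def)

lemma cinner_self: "cinner v v = of_real ((norm v)\<^sup>2)"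
proof -
  have "(norm v)\<^sup>2 = (\<Sum>i\<in>UNIV. (cmod (v $ i))\<^sup>2)"
    by (simp add: norm_vec_def L2_set_def sum_nonneg)
  then show ?thesis
    unfolding cinner_def cnj_mult_self by simp
qed

lemma continuous_on_cinner: "continuous_on A (cinner u)"
  unfolding cinner_def by (intro continuous_intros continuous_on_component continuous_on_id)

lemma psd_iff_cinner: "psd A \<longleftrightarrow> cadj A = A \<and> (\<forall>v. 0 \<le> Re (cinner v (A *v v)))"
  by (simp add: psd_def cinner_def)

lemma cinner_congruence: "cinner v ((cadj V ** A ** V) *v v) = cinner (V *v v) (A *v (V *v v))"
  by (metis cadj_cadj cinner_adjoint matrix_vector_mul_assoc)

lemma psd_congruence: "psd A \<Longrightarrow> psd (cadj V ** A ** V)"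
  by (simp add: psd_iff_cinner cinner_congruence cadj_mult matrix_mul_assoc)

lemma psd_add: "psd A \<Longrightarrow> psd B \<Longrightarrow> psd (A + B)"
  by (simp add: psd_iff_cinner cadj_add matrix_vector_mult_add_rdistrib cinner_add_right)

lemma scaleR_matrix_vector_mult: "(r *\<^sub>R A) *v v = of_real r *s (A *v v)"
  by (simp add: vec_eq_iff matrix_vector_mult_def sum_distrib_left mult.assoc)
    (simp add: scaleR_conv_of_real)

lemma psd_scaleR: "psd A \<Longrightarrow> 0 \<le> r \<Longrightarrow> psd (r *\<^sub>R A)"
  by (simp add: psd_iff_cinner cadj_scaleR scaleR_matrix_vector_mult cinner_scale_right)

lemma psd_zero: "psd 0"
  by (simp add: psd_iff_cinner vec_eq_iff)

lemma psd_sum: "(\<And>x. x \<in> X \<Longrightarrow> psd (f x)) \<Longrightarrow> psd (\<Sum>x\<in>X. f x)"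
  by (induction X rule: infinite_finite_induct) (auto simp: psd_add psd_zero)

lemma psd_cadj_mult_self: "psd (cadj A ** A)"
  using psd_congruence[of "mat 1" A]
  by (simp add: psd_iff_cinner cadj_mat cinner_self)

lemma cinner_axis: "cinner (axis i 1) (A *v axis j 1) = A $ i $ j"
  by (simp add: cinner_def matrix_vector_mult_def axis_def if_distrib if_distribR cong: if_cong)

lemma psd_diagonal_nonneg: "psd A \<Longrightarrow> 0 \<le> Re (A $ i $ i)"
  by (metis cinner_axis psd_iff_cinner)

lemma psd_unitary_conj: "psd A \<Longrightarrow> psd (V ** A ** cadj V)"
  using psd_congruence[of A "cadj V"] by simp

lemma psd_id_minus_congruence: "unitary U \<Longrightarrow> psd (mat 1 - A) \<Longrightarrow> psd (mat 1 - cadj U ** A ** U)"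
  by (metis (no_types) matrix_diff_ldistrib matrix_diff_rdistrib matrix_mul_rid psd_congruence
      unitary_simps(1))

definition diag_mat :: "('n::finite \<Rightarrow> real) \<Rightarrow> 'n cmat" where
  "diag_mat d = (\<chi> i j. if i = j then of_real (d i) else 0)"

lemma diag_mat_nth [simp]: "diag_mat d $ i $ j = (if i = j then of_real (d i) else 0)"
  by (simp add: diag_mat_def)

lemma mult_diag_mat_nth: "(A ** diag_mat d) $ i $ j = A $ i $ j * of_real (d j)"
  by (simp add: matrix_matrix_mult_def if_distrib if_distribR cong: if_cong)

lemma diag_mat_mult_nth: "(diag_mat d ** A) $ i $ j = of_real (d i) * A $ i $ j"
  by (simp add: matrix_matrix_mult_def if_distrib if_distribR cong: if_cong)

lemma diag_mat_mult: "diag_mat d ** diag_mat e = diag_mat (\<lambda>i. d i * e i)"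
  by (simp add: vec_eq_iff diag_mat_mult_nth)

lemma cadj_diag_mat [simp]: "cadj (diag_mat d) = diag_mat d"
  by (simp add: vec_eq_iff)

lemma ctrace_diag_mat: "ctrace (diag_mat d) = of_real (\<Sum>i\<in>UNIV. d i)"
  by (simp add: ctrace_def)

lemma diag_mat_vector_mult: "(diag_mat d *v v) $ i = of_real (d i) * v $ i"
  by (simp add: matrix_vector_mult_def if_distrib if_distribR cong: if_cong)

lemma psd_diag_mat: "(\<And>i. 0 \<le> d i) \<Longrightarrow> psd (diag_mat d)"
  by (simp add: psd_iff_cinner cinner_def diag_mat_vector_mult mult.left_commute cnj_mult_self
      sum_nonneg)

lemma psd_diag_mat_iff: "psd (diag_mat d) \<longleftrightarrow> (\<forall>i. 0 \<le> d i)"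
  by (metis Re_complex_of_real diag_mat_nth psd_diag_mat psd_diagonal_nonneg)

lemma unitary_diag_conj_mult:
  "unitary V \<Longrightarrow> (V ** diag_mat d ** cadj V) ** (V ** diag_mat e ** cadj V) =
     V ** diag_mat (\<lambda>i. d i * e i) ** cadj V"
  by (simp add: matrix_mul_assoc unitary_simps flip: diag_mat_mult)

section \<open>The spectral theorem\<close>

lemma nonneg_eq_0_if_quadratic_bound:
  fixes X K :: real
  assumes "0 \<le> X" and bound: "\<And>t. 0 < t \<Longrightarrow> 2 * t * X + t\<^sup>2 * K \<le> 0"
  shows "X = 0"
proof (rule ccontr)
  assume "X \<noteq> 0"
  with assms(1) have X: "0 < X" by simp
  define t where "t = X / (\<bar>K\<bar> + 1)"
  have t: "0 < t" using X by (simp add: t_def add_pos_nonneg)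
  have "t * (2 * X + t * K) \<le> 0" using bound[OF t] by (simp add: algebra_simps power2_eq_square)
  then have "2 * X + t * K \<le> 0" using t by (simp add: mult_le_0_iff)
  then have "2 * X \<le> t * - K" by simp
  also have "\<dots> \<le> t * \<bar>K\<bar>" using t by (intro mult_left_mono) auto
  also have "\<dots> < X" using X by (simp add: t_def field_simps)
  finally show False using X by simp
qed

lemma cinner_quadratic_scale: "cinner (c *s v) (A *v (c *s v)) = cnj c * c * cinner v (A *v v)"
  by (simp add: matrix_vector_mult_scale cinner_scale_left cinner_scale_right)

lemma cinner_hermitian_expand:
  assumes "cadj B = B"
  shows "Re (cinner (w + of_real t *s z) (B *v (w + of_real t *s z))) =
    Re (cinner w (B *v w)) + 2 * t * Re (cinner z (B *v w)) + t\<^sup>2 * Re (cinner z (B *v z))"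
proof -
  have "cinner w (B *v z) = cnj (cinner z (B *v w))"
    by (metis assms cinner_adjoint cnj_cinner)
  then show ?thesis
    by (simp add: matrix_vector_right_distrib matrix_vector_mult_scale cinner_add_left
        cinner_add_right cinner_scale_left cinner_scale_right power2_eq_square algebra_simps)
qed

text \<open>Moving from \<open>w\<close> towards \<open>B w\<close> increases the form at rate \<open>2 \<parallel>B w\<parallel>\<^sup>2\<close>.\<close>
lemma hermitian_kernel_if_max_on_subspace:
  assumes herm: "cadj B = B"
    and W: "\<And>v z t. v \<in> W \<Longrightarrow> z \<in> W \<Longrightarrow> v + of_real t *s z \<in> W"
    and w: "w \<in> W" and Bw: "B *v w \<in> W"
    and le: "\<And>v. v \<in> W \<Longrightarrow> Re (cinner v (B *v v)) \<le> 0"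
    and eq: "Re (cinner w (B *v w)) = 0"
  shows "B *v w = 0"
proof -
  let ?z = "B *v w"
  have "2 * t * (norm ?z)\<^sup>2 + t\<^sup>2 * Re (cinner ?z (B *v ?z)) \<le> 0" if "0 < t" for t
    using le[OF W[OF w Bw, of t]] eq cinner_hermitian_expand[OF herm, of w t ?z]
    by (simp add: cinner_self)
  then have "(norm ?z)\<^sup>2 = 0"
    by (intro nonneg_eq_0_if_quadratic_bound) auto
  then show ?thesis by simp
qed

lemma exists_max_quadratic_form_on_sphere:
  assumes "closed W" and scale: "\<And>v c. v \<in> W \<Longrightarrow> c *s v \<in> W" and r: "r \<in> W" "r \<noteq> 0"
  obtains w where "w \<in> W" "norm w = 1"
    "\<And>v. v \<in> W \<Longrightarrow> Re (cinner v (A *v v)) \<le> Re (cinner w (A *v w)) * (norm v)\<^sup>2"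
proof -
  define S where "S = sphere 0 1 \<inter> W"
  have normalize: "of_real (1 / norm v) *s v \<in> S" if "v \<in> W" "v \<noteq> 0" for v
  proof -
    have "of_real (1 / norm v) *s v = (1 / norm v) *\<^sub>R v"
      by (simp add: vec_eq_iff) (simp add: scaleR_conv_of_real)
    then show ?thesis
      using that scale[OF that(1), of "of_real (1 / norm v)"] by (simp add: S_def)
  qed
  have "compact S"
    unfolding S_def by (intro compact_Int_closed compact_sphere \<open>closed W\<close>)
  moreover have "S \<noteq> {}"
    using normalize[OF r] by blast
  moreover have "continuous_on S (\<lambda>v. Re (cinner v (A *v v)))"
    unfolding cinner_def matrix_vector_mult_def
    by (intro continuous_intros continuous_on_component continuous_on_id)
  ultimately have "\<exists>w\<in>S. \<forall>v\<in>S. Re (cinner v (A *v v)) \<le> Re (cinner w (A *v w))"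
    by (rule continuous_attains_sup)
  then obtain w where w: "w \<in> S" and max: "\<And>v. v \<in> S \<Longrightarrow>
      Re (cinner v (A *v v)) \<le> Re (cinner w (A *v w))"
    by blast
  have "Re (cinner v (A *v v)) \<le> Re (cinner w (A *v w)) * (norm v)\<^sup>2" if v: "v \<in> W" for v
  proof (cases "v = 0")
    case False
    have "Re (cinner (of_real (1 / norm v) *s v) (A *v (of_real (1 / norm v) *s v))) =
        Re (cinner v (A *v v)) / (norm v)\<^sup>2"
      by (simp add: cinner_quadratic_scale power2_eq_square)
    then have "Re (cinner v (A *v v)) / (norm v)\<^sup>2 \<le> Re (cinner w (A *v w))"
      using max[OF normalize[OF v False]] by simp
    then show ?thesis using False by (simp add: divide_le_eq)
  qed simp
  with w show thesis using that by (auto simp: S_def)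
qed

lemma hermitian_eigenvector_in_invariant_subspace:
  assumes herm: "cadj A = A" and "closed W"
    and W: "\<And>v z c. v \<in> W \<Longrightarrow> z \<in> W \<Longrightarrow> v + c *s z \<in> W"
    and AW: "\<And>v. v \<in> W \<Longrightarrow> A *v v \<in> W"
    and r: "r \<in> W" "r \<noteq> 0"
  obtains w \<mu> where "w \<in> W" "norm w = 1" "A *v w = of_real \<mu> *s w"
proof -
  have "0 \<in> W"
    using W[OF r(1) r(1), of "-1"] by (simp add: vec_eq_iff)
  then have scale: "c *s v \<in> W" if "v \<in> W" for v c
    using W[OF _ that] by (metis add_0)
  obtain w where w: "w \<in> W" "norm w = 1" and max: "\<And>v. v \<in> W \<Longrightarrow>
      Re (cinner v (A *v v)) \<le> Re (cinner w (A *v w)) * (norm v)\<^sup>2"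
    using exists_max_quadratic_form_on_sphere[OF \<open>closed W\<close> scale r] by blast
  define \<mu> where "\<mu> = Re (cinner w (A *v w))"
  define B where "B = A - mat (of_real \<mu>)"
  have Bv: "B *v v = A *v v - of_real \<mu> *s v" for v
    by (simp add: B_def matrix_vector_mult_diff_rdistrib mat_vector_mult)
  have form_B: "Re (cinner v (B *v v)) = Re (cinner v (A *v v)) - \<mu> * (norm v)\<^sup>2" for v
    by (simp add: Bv cinner_diff_right cinner_scale_right cinner_self)
  have "B *v w = 0"
  proof (rule hermitian_kernel_if_max_on_subspace)
    show "cadj B = B"
      by (simp add: B_def cadj_diff cadj_mat herm)
    show "B *v w \<in> W"
      using W[OF AW[OF w(1)] w(1), of "- of_real \<mu>"] by (simp add: Bv)
    show "Re (cinner v (B *v v)) \<le> 0" if "v \<in> W" for v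
      using max[OF that] by (simp add: form_B \<mu>_def)
    show "Re (cinner w (B *v w)) = 0"
      by (simp add: form_B \<mu>_def w)
  qed (use W w in auto)
  then have "A *v w = of_real \<mu> *s w"
    by (simp add: Bv)
  with w show thesis using that by blast
qed

lemma exists_orthogonal_to_orthonormal_family:
  fixes u :: "'i \<Rightarrow> complex ^ 'n::finite"
  assumes orth: "\<And>i j. i \<in> F \<Longrightarrow> j \<in> F \<Longrightarrow> cinner (u i) (u j) = of_bool (i = j)"
    and "finite F" and card: "card F < CARD('n)"
  obtains r where "r \<noteq> 0" "\<And>i. i \<in> F \<Longrightarrow> cinner (u i) r = 0"
proof -
  define P :: "'n cmat" where "P = (\<chi> a b. \<Sum>i\<in>F. u i $ a * cnj (u i $ b))"
  have P_apply: "P *v e = (\<Sum>i\<in>F. cinner (u i) e *s u i)" for e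
    unfolding P_def cinner_def matrix_vector_mult_def
    by (simp add: vec_eq_iff sum_component sum_distrib_left sum_distrib_right)
      (intro allI, subst sum.swap, simp add: mult_ac)
  have "ctrace P = (\<Sum>i\<in>F. cinner (u i) (u i))"
    unfolding P_def ctrace_def cinner_def by (simp add: mult.commute) (rule sum.swap)
  also have "\<dots> = of_nat (card F)"
    using orth by simp
  finally have "P \<noteq> mat 1"
    using card by (auto simp: ctrace_mat_1)
  then obtain e where e: "P *v e \<noteq> e"
    by (metis matrix_eq matrix_vector_mul_lid)
  \<comment> \<open>\<open>P\<close> is the orthogonal projection onto the span of the family, so \<open>e - P e\<close> works.\<close>
  have "cinner (u k) (e - P *v e) = 0" if "k \<in> F" for k
  proof -
    have "cinner (u k) (P *v e) = (\<Sum>i\<in>F. cinner (u i) e * of_bool (k = i))"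
      using orth[OF that] by (simp add: P_apply cinner_sum_right cinner_scale_right)
    also have "\<dots> = cinner (u k) e"
      using that \<open>finite F\<close> by (simp add: of_bool_def if_distrib if_distribR cong: if_cong)
    finally show ?thesis
      by (simp add: cinner_diff_right)
  qed
  moreover have "e - P *v e \<noteq> 0"
    using e by simp
  ultimately show thesis using that by blast
qed

lemma hermitian_eigenvector_orthogonal_to_family:
  fixes A :: "'n::finite cmat" and u :: "'i \<Rightarrow> complex ^ 'n"
  assumes herm: "cadj A = A" and "finite F" and card: "card F < CARD('n)"
    and orth: "\<And>i j. i \<in> F \<Longrightarrow> j \<in> F \<Longrightarrow> cinner (u i) (u j) = of_bool (i = j)"
    and eig: "\<And>i. i \<in> F \<Longrightarrow> A *v u i = of_real (lam i) *s u i"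
  obtains w \<mu> where "norm w = 1" "\<And>i. i \<in> F \<Longrightarrow> cinner (u i) w = 0" "A *v w = of_real \<mu> *s w"
proof -
  define W where "W = {v. \<forall>i\<in>F. cinner (u i) v = 0}"
  have "closed W"
    unfolding W_def Collect_ball_eq
    by (intro closed_INT ballI closed_Collect_eq continuous_on_cinner continuous_on_const)
  moreover have "v + c *s z \<in> W" if "v \<in> W" "z \<in> W" for v z c
    using that by (simp add: W_def cinner_add_right cinner_scale_right)
  moreover have "A *v v \<in> W" if "v \<in> W" for v
    using that eig herm by (simp add: W_def cinner_adjoint cinner_scale_left)
  moreover obtain r where "r \<noteq> 0" "\<And>i. i \<in> F \<Longrightarrow> cinner (u i) r = 0"
    using exists_orthogonal_to_orthonormal_family[OF orth \<open>finite F\<close> card] by blast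
  then have "r \<in> W" "r \<noteq> 0"
    by (auto simp: W_def)
  ultimately obtain w \<mu> where "w \<in> W" "norm w = 1" "A *v w = of_real \<mu> *s w"
    by (rule hermitian_eigenvector_in_invariant_subspace[OF herm])
  then show thesis
    using that by (auto simp: W_def)
qed

lemma hermitian_orthonormal_eigenvectors:
  fixes A :: "'n::finite cmat" and I :: "'n set"
  assumes herm: "cadj A = A" and "finite I"
  shows "\<exists>u lam. (\<forall>i\<in>I. \<forall>j\<in>I. cinner (u i) (u j) = of_bool (i = j)) \<and>
    (\<forall>i\<in>I. A *v u i = of_real (lam i) *s u i)"
  using \<open>finite I\<close>
proof (induction I rule: finite_induct)
  case (insert x F)
  then obtain u lam where orth: "\<forall>i\<in>F. \<forall>j\<in>F. cinner (u i) (u j) = of_bool (i = j)"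
    and eig: "\<forall>i\<in>F. A *v u i = of_real (lam i) *s u i"
    by blast
  have "F \<subset> UNIV"
    using insert.hyps by blast
  then have "card F < CARD('n)"
    by (rule psubset_card_mono[OF finite_class.finite_UNIV])
  then obtain w \<mu> where w: "norm w = 1" "\<And>i. i \<in> F \<Longrightarrow> cinner (u i) w = 0"
    "A *v w = of_real \<mu> *s w"
    using hermitian_eigenvector_orthogonal_to_family[OF herm insert.hyps(1)] orth eig by metis
  have "cinner w (u i) = 0" if "i \<in> F" for i
    using w(2)[OF that] cnj_cinner[of "u i" w] by simp
  moreover have "cinner w w = 1"
    using w(1) by (simp add: cinner_self)
  ultimately show ?case
    using orth eig w insert.hyps(2)
    by (intro exI[of _ "u(x := w)"] exI[of _ "lam(x := \<mu>)"]) auto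
qed simp

lemma hermitian_diagonalization:
  fixes A :: "'n::finite cmat"
  assumes herm: "cadj A = A"
  obtains V lam where "unitary V" "A = V ** diag_mat lam ** cadj V"
proof -
  obtain u :: "'n \<Rightarrow> complex ^ 'n" and lam
    where orth: "\<And>i j. cinner (u i) (u j) = of_bool (i = j)"
      and eig: "\<And>i. A *v u i = of_real (lam i) *s u i"
    using hermitian_orthonormal_eigenvectors[OF herm finite_class.finite_UNIV] by auto
  define V :: "'n cmat" where "V = (\<chi> a b. u b $ a)"
  have "(cadj V ** V) $ i $ j = cinner (u i) (u j)" for i j
    by (simp add: V_def cinner_def matrix_matrix_mult_def)
  then have "cadj V ** V = mat 1"
    by (simp add: vec_eq_iff orth mat_def)
  then have V: "unitary V"
    by (rule unitary_if_left_inverse)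
  have "(A ** V) $ a $ b = (A *v u b) $ a" for a b
    by (simp add: V_def matrix_matrix_mult_def matrix_vector_mult_def)
  then have "A ** V = V ** diag_mat lam"
    by (simp add: vec_eq_iff eig mult_diag_mat_nth V_def mult.commute)
  then have "A = V ** diag_mat lam ** cadj V"
    by (metis V matrix_mul_assoc matrix_mul_rid unitary_simps(2))
  with V show thesis using that by blast
qed

lemma psd_diagonalization:
  assumes "psd A"
  obtains V lam where "unitary V" "\<And>i. 0 \<le> lam i" "A = V ** diag_mat lam ** cadj V"
proof -
  obtain V lam where V: "unitary V" and A: "A = V ** diag_mat lam ** cadj V"
    using hermitian_diagonalization assms by (metis psd_def)
  have "cadj V ** A ** V = diag_mat lam"
    using V by (simp add: A matrix_mul_assoc unitary_simps)
  then have "psd (diag_mat lam)"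
    using psd_congruence[OF assms, of V] by simp
  with V A show thesis using that by (auto simp: psd_diag_mat_iff)
qed

section \<open>The matrix square root\<close>

lemma diag_mat_intertwining_sqrt:
  assumes QE: "diag_mat (\<lambda>i. (g i)\<^sup>2) ** Q = Q ** diag_mat l" and g: "\<And>i. 0 \<le> g i"
  shows "diag_mat g ** Q = Q ** diag_mat (\<lambda>i. sqrt (l i))"
proof -
  have "of_real (g k) * Q $ k $ m = Q $ k $ m * of_real (sqrt (l m))" for k m
  proof (cases "Q $ k $ m = 0")
    case False
    have "of_real ((g k)\<^sup>2) * Q $ k $ m = Q $ k $ m * of_real (l m)"
      using arg_cong[OF QE, of "\<lambda>M. M $ k $ m"] by (simp add: diag_mat_mult_nth mult_diag_mat_nth)
    then have "(g k)\<^sup>2 = l m"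
      using False by (simp add: mult.commute flip: of_real_power)
    then have "g k = sqrt (l m)"
      using g[of k] by (metis real_sqrt_unique)
    then show ?thesis by (simp add: mult.commute)
  qed simp
  then show ?thesis
    by (simp add: vec_eq_iff diag_mat_mult_nth mult_diag_mat_nth)
qed

lemma psd_unitary_diag_square_root_unique:
  assumes Z: "unitary Z" and V: "unitary V" and g: "\<And>i. 0 \<le> g i"
    and eq: "Z ** diag_mat (\<lambda>i. (g i)\<^sup>2) ** cadj Z = V ** diag_mat l ** cadj V"
  shows "Z ** diag_mat g ** cadj Z = V ** diag_mat (\<lambda>i. sqrt (l i)) ** cadj V"
proof -
  define Q where "Q = cadj Z ** V"
  have "diag_mat (\<lambda>i. (g i)\<^sup>2) ** Q = cadj Z ** (Z ** diag_mat (\<lambda>i. (g i)\<^sup>2) ** cadj Z) ** V"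
    using Z by (simp add: Q_def matrix_mul_assoc unitary_simps)
  also have "\<dots> = Q ** diag_mat l"
    using V by (simp add: eq Q_def matrix_mul_assoc unitary_simps)
  finally have "diag_mat g ** Q = Q ** diag_mat (\<lambda>i. sqrt (l i))"
    using g by (rule diag_mat_intertwining_sqrt)
  then have "Z ** (diag_mat g ** Q) ** cadj V = Z ** (Q ** diag_mat (\<lambda>i. sqrt (l i))) ** cadj V"
    by simp
  then show ?thesis
    using Z V by (simp add: Q_def matrix_mul_assoc unitary_simps)
qed

lemma msqrt_unitary_diag:
  assumes V: "unitary V" and l: "\<And>i. 0 \<le> l i"
  shows "msqrt (V ** diag_mat l ** cadj V) = V ** diag_mat (\<lambda>i. sqrt (l i)) ** cadj V"
  unfolding msqrt_def
proof (rule the_equality)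
  show "psd (V ** diag_mat (\<lambda>i. sqrt (l i)) ** cadj V) \<and>
      (V ** diag_mat (\<lambda>i. sqrt (l i)) ** cadj V) ** (V ** diag_mat (\<lambda>i. sqrt (l i)) ** cadj V) =
      V ** diag_mat l ** cadj V"
    using V l by (simp add: psd_unitary_conj psd_diag_mat unitary_diag_conj_mult)
next
  fix C assume C: "psd C \<and> C ** C = V ** diag_mat l ** cadj V"
  then obtain Z g where Z: "unitary Z" and g: "\<And>i. 0 \<le> g i" and "C = Z ** diag_mat g ** cadj Z"
    using psd_diagonalization by metis
  moreover have "Z ** diag_mat (\<lambda>i. (g i)\<^sup>2) ** cadj Z = V ** diag_mat l ** cadj V"
    using C Z by (simp add: calculation(3) unitary_diag_conj_mult power2_eq_square)
  ultimately show "C = V ** diag_mat (\<lambda>i. sqrt (l i)) ** cadj V"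
    using psd_unitary_diag_square_root_unique[OF Z V] by metis
qed

lemma re_ctrace_msqrt_unitary_diag:
  "unitary V \<Longrightarrow> (\<And>i. 0 \<le> l i) \<Longrightarrow>
    Re (ctrace (msqrt (V ** diag_mat l ** cadj V))) = (\<Sum>i\<in>UNIV. sqrt (l i))"
  by (simp add: msqrt_unitary_diag ctrace_unitary_conj ctrace_diag_mat)

section \<open>A trace inequality\<close>

lemma re_mult_le_amgm:
  fixes x y :: complex and s :: real
  assumes "0 < s"
  shows "Re (x * y) \<le> (s * (cmod x)\<^sup>2 + (cmod y)\<^sup>2 / s) / 2"
proof -
  have "Re (x * y) \<le> cmod x * cmod y"
    by (metis complex_Re_le_cmod norm_mult)
  moreover have "2 * s * (cmod x * cmod y) \<le> s * (s * (cmod x)\<^sup>2) + (cmod y)\<^sup>2"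
    using zero_le_power2[of "s * cmod x - cmod y"] by (simp add: power2_eq_square algebra_simps)
  then have "2 * (cmod x * cmod y) \<le> s * (cmod x)\<^sup>2 + (cmod y)\<^sup>2 / s"
    using assms by (simp add: field_simps)
  ultimately show ?thesis
    by simp
qed

lemma unitary_diag_conj_diagonal:
  "(Z ** diag_mat d ** cadj Z) $ a $ a = of_real (\<Sum>m\<in>UNIV. d m * (cmod (Z $ a $ m))\<^sup>2)"
proof -
  have "(Z ** diag_mat d ** cadj Z) $ a $ a = (\<Sum>m\<in>UNIV. (Z ** diag_mat d) $ a $ m * cnj (Z $ a $ m))"
    by (simp only: matrix_matrix_mult_def[of "Z ** diag_mat d" "cadj Z"] vec_lambda_beta cadj_nth)
  also have "\<dots> = (\<Sum>m\<in>UNIV. of_real (d m) * (Z $ a $ m * cnj (Z $ a $ m)))"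
    by (simp add: mult_diag_mat_nth mult_ac)
  finally show ?thesis
    by (simp add: mult_cnj_self)
qed

lemma unitary_row_norm:
  fixes Z :: "'n::finite cmat"
  shows "unitary Z \<Longrightarrow> (\<Sum>m\<in>UNIV. (cmod (Z $ a $ m))\<^sup>2) = 1"
proof -
  assume "unitary Z"
  moreover have "diag_mat (\<lambda>_. 1) = (mat 1 :: 'n cmat)"
    by (simp add: vec_eq_iff mat_nth)
  ultimately have "(Z ** diag_mat (\<lambda>_. 1) ** cadj Z) $ a $ a = 1"
    by (simp add: unitary_simps mat_nth)
  then have "of_real (\<Sum>m\<in>UNIV. (cmod (Z $ a $ m))\<^sup>2) = (1 :: complex)"
    by (simp only: unitary_diag_conj_diagonal mult_1)
  then show ?thesis
    by (simp only: of_real_eq_1_iff)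
qed

lemma hermitian_square_diagonal:
  assumes "cadj K = K"
  shows "(K ** K) $ l $ l = of_real (\<Sum>k\<in>UNIV. (cmod (K $ l $ k))\<^sup>2)"
proof -
  have "K $ k $ l = cnj (K $ l $ k)" for k
    by (metis assms cadj_nth)
  then show ?thesis
    by (simp add: matrix_matrix_mult_def mult_cnj_self)
qed

lemma psd_contraction_column_norm_le_1:
  assumes P: "psd P" and P1: "psd (mat 1 - P)"
  shows "(\<Sum>k\<in>UNIV. (cmod (P $ k $ l))\<^sup>2) \<le> 1"
proof -
  obtain Z \<pi> where Z: "unitary Z" and \<pi>: "\<And>i. 0 \<le> \<pi> i" and Pd: "P = Z ** diag_mat \<pi> ** cadj Z"
    using psd_diagonalization[OF P] by metis
  have "cadj Z ** (mat 1 - P) ** Z = mat 1 - diag_mat \<pi>"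
    using Z by (simp add: Pd matrix_diff_ldistrib matrix_diff_rdistrib matrix_mul_assoc unitary_simps)
  also have "\<dots> = diag_mat (\<lambda>i. 1 - \<pi> i)"
    by (simp add: vec_eq_iff mat_nth)
  finally have "cadj Z ** (mat 1 - P) ** Z = diag_mat (\<lambda>i. 1 - \<pi> i)" .
  then have \<pi>1: "\<pi> i \<le> 1" for i
    using psd_congruence[OF P1, of Z] by (simp add: psd_diag_mat_iff)
  have "P $ k $ l = cnj (P $ l $ k)" for k
    using P by (metis cadj_nth psd_def)
  then have "of_real (\<Sum>k\<in>UNIV. (cmod (P $ k $ l))\<^sup>2) = (P ** P) $ l $ l"
    using hermitian_square_diagonal[of P l] P by (simp add: psd_def)
  also have "P ** P = Z ** diag_mat (\<lambda>i. (\<pi> i)\<^sup>2) ** cadj Z"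
    using Z by (simp add: Pd unitary_diag_conj_mult power2_eq_square)
  finally have "(\<Sum>k\<in>UNIV. (cmod (P $ k $ l))\<^sup>2) = (\<Sum>m\<in>UNIV. (\<pi> m)\<^sup>2 * (cmod (Z $ l $ m))\<^sup>2)"
    by (simp only: unitary_diag_conj_diagonal of_real_eq_iff)
  also have "\<dots> \<le> (\<Sum>m\<in>UNIV. (cmod (Z $ l $ m))\<^sup>2)"
    using \<pi> \<pi>1 by (intro sum_mono mult_left_le_one_le) (auto simp: power_le_one)
  also have "\<dots> = 1"
    using Z by (rule unitary_row_norm)
  finally show ?thesis .
qed

lemma re_ctrace_diag_mult_square:
  assumes "cadj K = K"
  shows "Re (ctrace (diag_mat d ** K ** K)) = (\<Sum>l\<in>UNIV. d l * (\<Sum>k\<in>UNIV. (cmod (K $ l $ k))\<^sup>2))"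
  by (simp add: ctrace_def diag_mat_mult_nth hermitian_square_diagonal[OF assms] Re_sum
      flip: matrix_mul_assoc)

lemma re_ctrace_mult_le_diag:
  assumes P: "psd P" "psd (mat 1 - P)" and K: "cadj K = K" and \<beta>: "\<And>l. 0 < \<beta> l"
  shows "Re (ctrace (P ** K)) \<le>
    ((\<Sum>l\<in>UNIV. \<beta> l) + Re (ctrace (diag_mat (\<lambda>l. 1 / \<beta> l) ** K ** K))) / 2"
proof -
  define c where "c l = (\<Sum>k\<in>UNIV. (cmod (K $ l $ k))\<^sup>2)" for l
  have row: "(\<Sum>k\<in>UNIV. Re (P $ k $ l * K $ l $ k)) \<le> (\<beta> l + c l / \<beta> l) / 2" for l
  proof -
    have "(\<Sum>k\<in>UNIV. Re (P $ k $ l * K $ l $ k)) \<le>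
        (\<Sum>k\<in>UNIV. (\<beta> l * (cmod (P $ k $ l))\<^sup>2 + (cmod (K $ l $ k))\<^sup>2 / \<beta> l) / 2)"
      by (intro sum_mono re_mult_le_amgm \<beta>)
    also have "\<dots> = ((\<Sum>k\<in>UNIV. \<beta> l * (cmod (P $ k $ l))\<^sup>2) +
        (\<Sum>k\<in>UNIV. (cmod (K $ l $ k))\<^sup>2 / \<beta> l)) / 2"
      by (simp add: sum.distrib flip: sum_divide_distrib)
    also have "\<dots> = (\<beta> l * (\<Sum>k\<in>UNIV. (cmod (P $ k $ l))\<^sup>2) + c l / \<beta> l) / 2"
      by (simp add: c_def sum_distrib_left sum_divide_distrib)
    also have "\<dots> \<le> (\<beta> l + c l / \<beta> l) / 2"
      using psd_contraction_column_norm_le_1[OF P, of l] \<beta>[of l] by simp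
    finally show ?thesis .
  qed
  have "Re (ctrace (P ** K)) = (\<Sum>l\<in>UNIV. \<Sum>k\<in>UNIV. Re (P $ k $ l * K $ l $ k))"
    by (simp add: ctrace_mult_eq_sum Re_sum)
  also have "\<dots> \<le> (\<Sum>l\<in>UNIV. (\<beta> l + c l / \<beta> l) / 2)"
    by (intro sum_mono row)
  also have "\<dots> = ((\<Sum>l\<in>UNIV. \<beta> l) + (\<Sum>l\<in>UNIV. c l / \<beta> l)) / 2"
    by (simp add: sum.distrib flip: sum_divide_distrib)
  also have "\<dots> = ((\<Sum>l\<in>UNIV. \<beta> l) + Re (ctrace (diag_mat (\<lambda>l. 1 / \<beta> l) ** K ** K))) / 2"
    by (simp add: re_ctrace_diag_mult_square[OF K] c_def)
  finally show ?thesis .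
qed

text \<open>The pair \<open>(V, \<beta>)\<close> encodes the positive definite \<open>B = V diag(\<beta>) V\<^sup>\<dagger>\<close>, so the matrix
  \<open>V diag(1/\<beta>) V\<^sup>\<dagger>\<close> below is \<open>B\<^sup>-\<^sup>1\<close>.\<close>
lemma re_ctrace_mult_le_amgm:
  assumes P: "psd P" "psd (mat 1 - P)" and K: "cadj K = K"
    and V: "unitary V" and \<beta>: "\<And>l. 0 < \<beta> l"
  shows "Re (ctrace (P ** K)) \<le>
    ((\<Sum>l\<in>UNIV. \<beta> l) + Re (ctrace (V ** diag_mat (\<lambda>l. 1 / \<beta> l) ** cadj V ** K ** K))) / 2"
proof -
  let ?P = "cadj V ** P ** V" and ?K = "cadj V ** K ** V"
  have "psd (mat 1 - ?P)"
    using psd_id_minus_congruence[OF V P(2)] .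
  moreover have "cadj ?K = ?K"
    using K by (simp add: cadj_mult matrix_mul_assoc)
  ultimately have "Re (ctrace (?P ** ?K)) \<le>
      ((\<Sum>l\<in>UNIV. \<beta> l) + Re (ctrace (diag_mat (\<lambda>l. 1 / \<beta> l) ** ?K ** ?K))) / 2"
    using re_ctrace_mult_le_diag[OF psd_congruence[OF P(1)]] \<beta> by blast
  moreover have "ctrace (?P ** ?K) = ctrace (P ** K)"
    using V ctrace_unitary_conj'[OF V, of "P ** K"] by (simp add: matrix_mul_assoc unitary_simps)
  moreover have "ctrace (diag_mat (\<lambda>l. 1 / \<beta> l) ** ?K ** ?K) =
      ctrace (V ** diag_mat (\<lambda>l. 1 / \<beta> l) ** cadj V ** K ** K)"
    using V ctrace_unitary_conj'[OF V, of "V ** diag_mat (\<lambda>l. 1 / \<beta> l) ** cadj V ** K ** K"]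
    by (simp add: matrix_mul_assoc unitary_simps)
  ultimately show ?thesis
    by simp
qed

section \<open>Moments of Rademacher signs\<close>

abbreviation rademacher_signs :: "nat \<Rightarrow> (nat \<Rightarrow> real) pmf" where
  "rademacher_signs N \<equiv> Pi_pmf {..<N} 1 (\<lambda>_. pmf_of_set {-1, 1})"

lemma finite_set_Pi_pmf:
  "finite A \<Longrightarrow> finite (set_pmf q) \<Longrightarrow> finite (set_pmf (Pi_pmf A d (\<lambda>_. q)))"
  by (simp add: set_Pi_pmf finite_PiE_dflt)

lemma finite_set_rademacher_signs: "finite (set_pmf (rademacher_signs N))"
  by (simp add: finite_set_Pi_pmf)

lemma expectation_Pi_pmf_component:
  fixes f :: "'a \<Rightarrow> real"
  assumes "finite A" "j \<in> A"
  shows "measure_pmf.expectation (Pi_pmf A d (\<lambda>_. q)) (\<lambda>D. f (D j)) = measure_pmf.expectation q f"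
proof -
  have "measure_pmf.expectation (Pi_pmf A d (\<lambda>_. q)) (\<lambda>D. f (D j)) =
      measure_pmf.expectation (map_pmf (\<lambda>D. D j) (Pi_pmf A d (\<lambda>_. q))) f"
    by simp
  also have "map_pmf (\<lambda>D. D j) (Pi_pmf A d (\<lambda>_. q)) = q"
    using Pi_pmf_component[OF assms(1), of j d "\<lambda>_. q"] assms(2) by simp
  finally show ?thesis .
qed

lemma expectation_sign: "j < N \<Longrightarrow> measure_pmf.expectation (rademacher_signs N) (\<lambda>\<sigma>. \<sigma> j) = 0"
  by (simp add: expectation_Pi_pmf_component[where f = "\<lambda>y. y"] integral_pmf_of_set)

lemma expectation_sign_square:
  "j < N \<Longrightarrow> measure_pmf.expectation (rademacher_signs N) (\<lambda>\<sigma>. \<sigma> j * \<sigma> j) = 1"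
  by (simp add: expectation_Pi_pmf_component[where f = "\<lambda>y. y * y"] integral_pmf_of_set)

text \<open>Independence is available only through \<open>expectation_prod_Pi_pmf\<close>, which needs
  nonnegative factors; hence the detour through \<open>(1 + \<sigma> j) (1 + \<sigma> k)\<close>.\<close>
lemma expectation_sign_product:
  assumes "j < N" "k < N" "j \<noteq> k"
  shows "measure_pmf.expectation (rademacher_signs N) (\<lambda>\<sigma>. \<sigma> j * \<sigma> k) = 0"
proof -
  let ?E = "measure_pmf.expectation (rademacher_signs N)"
  define f where "f i y = (if i = j \<or> i = k then 1 + y else (1::real))" for i y
  have "(\<Prod>i\<in>{..<N}. f i (\<sigma> i)) = (1 + \<sigma> j) * (1 + \<sigma> k)" for \<sigma>
  proof -
    have "(\<Prod>i\<in>{..<N}. f i (\<sigma> i)) = (\<Prod>i\<in>{j, k}. f i (\<sigma> i))"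
      using assms by (intro prod.mono_neutral_right) (auto simp: f_def)
    then show ?thesis
      using assms by (simp add: f_def)
  qed
  moreover have "?E (\<lambda>\<sigma>. \<Prod>i\<in>{..<N}. f i (\<sigma> i)) = 1"
    by (subst expectation_prod_Pi_pmf)
      (auto simp: f_def integral_pmf_of_set integrable_measure_pmf_finite intro!: prod.neutral)
  moreover have "?E (\<lambda>\<sigma>. (1 + \<sigma> j) * (1 + \<sigma> k)) = 1 + ?E (\<lambda>\<sigma>. \<sigma> j) + ?E (\<lambda>\<sigma>. \<sigma> k) + ?E (\<lambda>\<sigma>. \<sigma> j * \<sigma> k)"
    by (simp add: algebra_simps integrable_measure_pmf_finite finite_set_rademacher_signs)
  ultimately show ?thesis
    using assms by (simp add: expectation_sign)
qed

lemma expectation_pair_pmf_mult: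
  fixes f :: "'a \<Rightarrow> real" and g :: "'b \<Rightarrow> real"
  assumes A: "finite (set_pmf A)" and B: "finite (set_pmf B)"
  shows "measure_pmf.expectation (pair_pmf A B) (\<lambda>x. f (fst x) * g (snd x)) =
    measure_pmf.expectation A f * measure_pmf.expectation B g"
proof -
  have "measure_pmf.expectation (pair_pmf A B) (\<lambda>x. f (fst x) * g (snd x)) =
      (\<Sum>(a, b)\<in>set_pmf A \<times> set_pmf B. (f a * pmf A a) * (g b * pmf B b))"
    using A B by (subst integral_measure_pmf_real[of "set_pmf A \<times> set_pmf B"])
      (auto intro!: sum.cong simp: pmf_pair mult_ac)
  also have "\<dots> = (\<Sum>a\<in>set_pmf A. f a * pmf A a) * (\<Sum>b\<in>set_pmf B. g b * pmf B b)"
    by (simp add: sum.cartesian_product[symmetric] sum_product)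
  also have "\<dots> = measure_pmf.expectation A f * measure_pmf.expectation B g"
    using A B by (simp add: integral_measure_pmf_real)
  finally show ?thesis .
qed

section \<open>Bounding the Rademacher complexity\<close>

definition label_sign :: "nat \<Rightarrow> real" where
  "label_sign c = (if c = 0 then -1 else 1)"

definition signed_sum ::
  "nat \<Rightarrow> ('x \<Rightarrow> 'n::finite cmat) \<Rightarrow> (nat \<Rightarrow> nat \<times> 'x) \<Rightarrow> (nat \<Rightarrow> real) \<Rightarrow> 'n cmat" where
  "signed_sum N \<kappa> D \<sigma> = (\<Sum>j<N. (\<sigma> j * label_sign (fst (D j))) *\<^sub>R \<kappa> (snd (D j)))"

lemma loss_binary:
  assumes "M \<in> binary_povms" "ctrace (\<rho> \<theta> x) = 1" "c \<in> {0, 1}"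
  shows "loss \<rho> \<theta> M (c, x) = of_bool (c = 0) + label_sign c * Re (ctrace (M 0 ** \<rho> \<theta> x))"
proof -
  have "M 1 = mat 1 - M 0"
    using assms(1) by (simp add: binary_povms_def algebra_simps)
  then have "Re (ctrace (M 1 ** \<rho> \<theta> x)) = 1 - Re (ctrace (M 0 ** \<rho> \<theta> x))"
    using assms(2) by (simp add: matrix_diff_rdistrib ctrace_diff)
  then show ?thesis
    using assms(3) by (auto simp: loss_def label_sign_def)
qed

lemma sum_signed_loss_eq:
  assumes tr: "\<And>x. ctrace (\<rho> \<theta> x) = 1" and M: "M \<in> binary_povms"
    and labels: "\<And>j. j < N \<Longrightarrow> fst (D j) \<in> {0, 1}"
  shows "(\<Sum>j<N. \<sigma> j * loss \<rho> \<theta> M (D j)) = (\<Sum>j<N. \<sigma> j * of_bool (fst (D j) = 0)) +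
    (\<Sum>j<N. (\<sigma> j * label_sign (fst (D j))) * Re (ctrace (M 0 ** \<rho> \<theta> (snd (D j)))))"
proof -
  have "\<sigma> j * loss \<rho> \<theta> M (D j) = \<sigma> j * of_bool (fst (D j) = 0) +
      (\<sigma> j * label_sign (fst (D j))) * Re (ctrace (M 0 ** \<rho> \<theta> (snd (D j))))" if "j < N" for j
  proof -
    obtain c x where Dj: "D j = (c, x)"
      by fastforce
    have "loss \<rho> \<theta> M (c, x) = of_bool (c = 0) + label_sign c * Re (ctrace (M 0 ** \<rho> \<theta> x))"
      using labels[OF that] by (intro loss_binary[where \<rho> = \<rho>, OF M tr]) (simp add: Dj)
    then show ?thesis
      by (simp add: Dj algebra_simps)
  qed
  then show ?thesis
    by (simp add: sum.distrib)
qed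

lemma sum_loss_le:
  assumes U: "unitary U" and \<kappa>: "\<And>x. cadj (\<kappa> x) = \<kappa> x" "\<And>x. ctrace (\<kappa> x) = 1"
    and \<rho>: "\<And>x. \<rho> \<theta> x = U ** \<kappa> x ** cadj U"
    and M: "M \<in> binary_povms" and labels: "\<And>j. j < N \<Longrightarrow> fst (D j) \<in> {0, 1}"
    and V: "unitary V" and \<beta>: "\<And>l. 0 < \<beta> l"
  shows "(\<Sum>j<N. \<sigma> j * loss \<rho> \<theta> M (D j)) \<le> (\<Sum>j<N. \<sigma> j * of_bool (fst (D j) = 0)) +
    ((\<Sum>l\<in>UNIV. \<beta> l) +
      Re (ctrace (V ** diag_mat (\<lambda>l. 1 / \<beta> l) ** cadj V ** signed_sum N \<kappa> D \<sigma> ** signed_sum N \<kappa> D \<sigma>))) / 2"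
proof -
  let ?K = "signed_sum N \<kappa> D \<sigma>" and ?P = "cadj U ** M 0 ** U"
  have "psd (M 0)" "psd (M 1)" "M 1 = mat 1 - M 0"
    using M by (simp_all add: binary_povms_def algebra_simps)
  then have M01: "psd (M 0)" "psd (mat 1 - M 0)"
    by metis+
  have "(\<Sum>j<N. \<sigma> j * loss \<rho> \<theta> M (D j)) = (\<Sum>j<N. \<sigma> j * of_bool (fst (D j) = 0)) +
      (\<Sum>j<N. (\<sigma> j * label_sign (fst (D j))) * Re (ctrace (M 0 ** \<rho> \<theta> (snd (D j)))))"
    using M labels by (intro sum_signed_loss_eq) (simp_all add: \<rho> ctrace_unitary_conj U \<kappa>(2))
  also have "(\<Sum>j<N. (\<sigma> j * label_sign (fst (D j))) * Re (ctrace (M 0 ** \<rho> \<theta> (snd (D j))))) =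
      Re (ctrace (M 0 ** U ** ?K ** cadj U))"
    by (simp add: signed_sum_def \<rho> matrix_sum_ldistrib matrix_sum_rdistrib ctrace_sum
        ctrace_scaleR Re_sum matrix_scalar_ac matrix_mul_assoc flip: scalar_matrix_assoc)
  also have "\<dots> = Re (ctrace (?P ** ?K))"
    by (metis ctrace_mult_commute matrix_mul_assoc)
  also have "\<dots> \<le> ((\<Sum>l\<in>UNIV. \<beta> l) + Re (ctrace (V ** diag_mat (\<lambda>l. 1 / \<beta> l) ** cadj V ** ?K ** ?K))) / 2"
    using psd_id_minus_congruence[OF U M01(2)]
    by (intro re_ctrace_mult_le_amgm[OF psd_congruence[OF M01(1)] _ _ V \<beta>])
      (simp_all add: signed_sum_def cadj_sum cadj_scaleR \<kappa>(1))
  finally show ?thesis by simp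
qed

lemma label_sign_square [simp]: "label_sign c * label_sign c = 1"
  by (simp add: label_sign_def)

lemma re_ctrace_signed_sum_square:
  "Re (ctrace (W ** signed_sum N \<kappa> D \<sigma> ** signed_sum N \<kappa> D \<sigma>)) = (\<Sum>j<N. \<Sum>k<N. (\<sigma> j * \<sigma> k) *
    (label_sign (fst (D j)) * label_sign (fst (D k)) * Re (ctrace (W ** \<kappa> (snd (D j)) ** \<kappa> (snd (D k))))))"
  by (simp add: signed_sum_def matrix_sum_ldistrib matrix_sum_rdistrib matrix_scalar_ac ctrace_sum
      ctrace_scaleR Re_sum sum_distrib_left flip: scalar_matrix_assoc, subst sum.swap, simp add: mult_ac)

lemma expectation_re_ctrace_mult:
  fixes f :: "'a \<Rightarrow> 'n::finite cmat"
  assumes "finite (set_pmf q)"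
  shows "measure_pmf.expectation q (\<lambda>x. Re (ctrace (W ** f x))) =
    Re (ctrace (W ** measure_pmf.expectation q f))"
proof -
  have "linear (\<lambda>A. Re (ctrace (W ** A)))"
    by (intro linearI) (simp_all add: matrix_add_ldistrib ctrace_add matrix_scalar_ac
        ctrace_scaleR flip: scalar_matrix_assoc)
  then show ?thesis
    using assms by (intro integral_bounded_linear integrable_measure_pmf_finite)
      (simp add: linear_conv_bounded_linear)
qed

lemma expectation_re_ctrace_signed_sum_square:
  fixes p :: "(nat \<times> 'x) pmf" and \<kappa> :: "'x \<Rightarrow> 'n::finite cmat"
  assumes fin: "finite (set_pmf p)"
  shows "measure_pmf.expectation (pair_pmf (Pi_pmf {..<N} d (\<lambda>_. p)) (rademacher_signs N))
      (\<lambda>(D, \<sigma>). Re (ctrace (W ** signed_sum N \<kappa> D \<sigma> ** signed_sum N \<kappa> D \<sigma>))) =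
    real N * Re (ctrace (W ** measure_pmf.expectation (map_pmf snd p) (\<lambda>x. \<kappa> x ** \<kappa> x)))"
proof -
  let ?PD = "Pi_pmf {..<N} d (\<lambda>_. p)" and ?PS = "rademacher_signs N"
  let ?R = "Re (ctrace (W ** measure_pmf.expectation (map_pmf snd p) (\<lambda>x. \<kappa> x ** \<kappa> x)))"
  define g where "g cx cy = label_sign (fst cx) * label_sign (fst cy) *
    Re (ctrace (W ** \<kappa> (snd cx) ** \<kappa> (snd cy)))" for cx cy
  have finPD: "finite (set_pmf ?PD)"
    using fin by (simp add: finite_set_Pi_pmf)
  have "measure_pmf.expectation p (\<lambda>cx. g cx cx) =
      measure_pmf.expectation (map_pmf snd p) (\<lambda>x. Re (ctrace (W ** (\<kappa> x ** \<kappa> x))))"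
    by (simp add: g_def matrix_mul_assoc)
  also have "\<dots> = ?R"
    using fin by (intro expectation_re_ctrace_mult) simp
  finally have diag: "measure_pmf.expectation p (\<lambda>cx. g cx cx) = ?R" .
  have "measure_pmf.expectation (pair_pmf ?PD ?PS) (\<lambda>x. g (fst x j) (fst x k) * (snd x j * snd x k)) =
      (if j = k then ?R else 0)" if "j < N" "k < N" for j k
  proof -
    have "measure_pmf.expectation (pair_pmf ?PD ?PS) (\<lambda>x. g (fst x j) (fst x k) * (snd x j * snd x k)) =
        measure_pmf.expectation ?PD (\<lambda>D. g (D j) (D k)) * measure_pmf.expectation ?PS (\<lambda>\<sigma>. \<sigma> j * \<sigma> k)"
      by (rule expectation_pair_pmf_mult[OF finPD finite_set_rademacher_signs])
    also have "\<dots> = (if j = k then ?R else 0)"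
      using that diag
      by (simp add: expectation_sign_product expectation_sign_square
          expectation_Pi_pmf_component[where f = "\<lambda>cx. g cx cx"])
    finally show ?thesis .
  qed
  then have "measure_pmf.expectation (pair_pmf ?PD ?PS)
      (\<lambda>x. \<Sum>j<N. \<Sum>k<N. g (fst x j) (fst x k) * (snd x j * snd x k)) = real N * ?R"
    using finPD by (simp add: integrable_measure_pmf_finite finite_set_rademacher_signs)
  then show ?thesis
    by (simp add: split_def re_ctrace_signed_sum_square g_def mult_ac)
qed

lemma binary_povms_nonempty: "binary_povms \<noteq> {}"
proof -
  have "(\<lambda>c. if c = 0 then mat 1 else 0) \<in> binary_povms"
    using psd_cadj_mult_self[of "mat 1"] by (simp add: binary_povms_def psd_zero cadj_mat)
  then show ?thesis by blast
qed

lemma sup_sum_loss_le: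
  fixes U :: "'t \<Rightarrow> 'n::finite cmat" and \<kappa> :: "'x \<Rightarrow> 'n cmat"
  assumes \<Theta>: "\<Theta> \<noteq> {}" and U: "\<And>\<theta>. unitary (U \<theta>)"
    and \<kappa>: "\<And>x. cadj (\<kappa> x) = \<kappa> x" "\<And>x. ctrace (\<kappa> x) = 1"
    and \<rho>: "\<And>\<theta> x. \<rho> \<theta> x = U \<theta> ** \<kappa> x ** cadj (U \<theta>)"
    and labels: "\<And>j. j < N \<Longrightarrow> fst (D j) \<in> {0, 1}"
    and V: "unitary V" and \<beta>: "\<And>l. 0 < \<beta> l"
  shows "(SUP tm\<in>\<Theta> \<times> binary_povms. (\<Sum>j<N. \<sigma> j * loss \<rho> (fst tm) (snd tm) (D j)) / sqrt (real N)) \<le>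
    ((\<Sum>j<N. \<sigma> j * of_bool (fst (D j) = 0)) + ((\<Sum>l\<in>UNIV. \<beta> l) +
      Re (ctrace (V ** diag_mat (\<lambda>l. 1 / \<beta> l) ** cadj V ** signed_sum N \<kappa> D \<sigma> ** signed_sum N \<kappa> D \<sigma>))) / 2)
    / sqrt (real N)"
proof (rule cSUP_least, goal_cases)
  case 1
  show ?case
    using \<Theta> binary_povms_nonempty by blast
next
  case (2 tm)
  then show ?case
    using sum_loss_le[where \<rho> = \<rho> and \<theta> = "fst tm" and M = "snd tm", OF U \<kappa> \<rho> _ labels V \<beta>]
    by (intro divide_right_mono) auto
qed

lemma expectation_sum_sign_mult:
  assumes "finite (set_pmf P)"
  shows "measure_pmf.expectation (pair_pmf P (rademacher_signs N))
    (\<lambda>(D, \<sigma>). \<Sum>j<N. \<sigma> j * f D j) = 0"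
proof -
  have "measure_pmf.expectation (pair_pmf P (rademacher_signs N)) (\<lambda>x. f (fst x) j * snd x j) = 0"
    if "j < N" for j
    using expectation_pair_pmf_mult[OF assms finite_set_rademacher_signs,
        where f = "\<lambda>D. f D j" and g = "\<lambda>\<sigma>. \<sigma> j"]
      that by (simp add: expectation_sign)
  then show ?thesis
    using assms by (simp add: split_def mult.commute integrable_measure_pmf_finite
        finite_set_rademacher_signs)
qed

lemma diag_mat_scale: "diag_mat (\<lambda>l. c * d l) = c *\<^sub>R diag_mat d"
  by (simp add: vec_eq_iff) (simp add: scaleR_conv_of_real)

lemma rademacher_le_regularized_trace:
  fixes p :: "(nat \<times> 'x) pmf" and U :: "'t \<Rightarrow> 'n::finite cmat" and \<kappa> :: "'x \<Rightarrow> 'n cmat"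
  assumes fin: "finite (set_pmf p)" and labels: "set_pmf p \<subseteq> {0, 1} \<times> UNIV"
    and \<Theta>: "\<Theta> \<noteq> {}" and N: "0 < N"
    and U: "\<And>\<theta>. unitary (U \<theta>)" and \<kappa>: "\<And>x. cadj (\<kappa> x) = \<kappa> x" "\<And>x. ctrace (\<kappa> x) = 1"
    and \<rho>: "\<And>\<theta> x. \<rho> \<theta> x = U \<theta> ** \<kappa> x ** cadj (U \<theta>)"
    and V: "unitary V" and \<beta>: "\<And>l. 0 < \<beta> l"
  shows "rademacher N p \<Theta> \<rho> \<le> ((\<Sum>l\<in>UNIV. \<beta> l) + Re (ctrace (V ** diag_mat (\<lambda>l. 1 / \<beta> l) ** cadj V **
    measure_pmf.expectation (map_pmf snd p) (\<lambda>x. \<kappa> x ** \<kappa> x)))) / 2"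
proof -
  let ?PD = "Pi_pmf {..<N} undefined (\<lambda>_. p)" and ?PS = "rademacher_signs N"
  let ?E = "measure_pmf.expectation (map_pmf snd p) (\<lambda>x. \<kappa> x ** \<kappa> x)"
  let ?Binv = "V ** diag_mat (\<lambda>l. 1 / \<beta> l) ** cadj V"
  define a where "a = sqrt (real N)"
  have a: "0 < a" "a * a = real N"
    using N by (simp_all add: a_def)
  \<comment> \<open>The bound is applied with the weights \<open>a \<beta>\<close>; this balances the \<open>N\<close> diagonal terms of
    the square of the signed sum against the normalisation \<open>1 / sqrt N\<close>.\<close>
  define W where "W = (1 / a) *\<^sub>R ?Binv"
  have W: "V ** diag_mat (\<lambda>l. 1 / (a * \<beta> l)) ** cadj V = W"
    using diag_mat_scale[of "1 / a" "\<lambda>l. 1 / \<beta> l"]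
    by (simp add: W_def matrix_scalar_ac flip: scalar_matrix_assoc)
  define H where "H = (\<lambda>(D, \<sigma>). ((\<Sum>j<N. \<sigma> j * of_bool (fst (D j) = 0)) +
    (a * (\<Sum>l\<in>UNIV. \<beta> l) + Re (ctrace (W ** signed_sum N \<kappa> D \<sigma> ** signed_sum N \<kappa> D \<sigma>))) / 2) / a)"
  have fin_pair: "finite (set_pmf (pair_pmf ?PD ?PS))"
    using fin by (simp add: finite_set_Pi_pmf)
  have "rademacher N p \<Theta> \<rho> \<le> measure_pmf.expectation (pair_pmf ?PD ?PS) H"
    unfolding rademacher_def
  proof (intro integral_mono_AE integrable_measure_pmf_finite fin_pair AE_pmfI)
    fix x assume "x \<in> set_pmf (pair_pmf ?PD ?PS)"
    then have "fst x j \<in> set_pmf p" if "j < N" for j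
      using that by (auto simp: set_Pi_pmf PiE_dflt_def)
    then have lab: "fst (fst x j) \<in> {0, 1}" if "j < N" for j
      using subsetD[OF labels, of "fst x j"] that by (auto simp: mem_Times_iff)
    from sup_sum_loss_le[where \<rho> = \<rho> and \<kappa> = \<kappa> and U = U and N = N and D = "fst x"
        and \<beta> = "\<lambda>l. a * \<beta> l" and \<sigma> = "snd x", OF \<Theta> U \<kappa> \<rho> lab V] a \<beta>
    show "(case x of (D, \<sigma>) \<Rightarrow> SUP tm\<in>\<Theta> \<times> binary_povms.
        (\<Sum>j<N. \<sigma> j * loss \<rho> (fst tm) (snd tm) (D j)) / sqrt (real N)) \<le> H x"
      by (simp add: H_def W case_prod_beta sum_distrib_left flip: a_def)
  qed
  also have "\<dots> = (a * (\<Sum>l\<in>UNIV. \<beta> l) + real N * Re (ctrace (W ** ?E))) / 2 / a"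
    using expectation_sum_sign_mult[where P = ?PD and N = N and f = "\<lambda>D j. of_bool (fst (D j) = 0)"]
      expectation_re_ctrace_signed_sum_square[OF fin, of N undefined W \<kappa>] fin fin_pair
    by (simp add: H_def split_def integrable_measure_pmf_finite finite_set_Pi_pmf add_divide_distrib)
  also have "\<dots> = ((\<Sum>l\<in>UNIV. \<beta> l) + Re (ctrace (?Binv ** ?E))) / 2"
    using a by (simp add: W_def ctrace_scaleR field_simps flip: scalar_matrix_assoc)
  finally show ?thesis .
qed

lemma rademacher_0: "\<Theta> \<noteq> {} \<Longrightarrow> rademacher 0 p \<Theta> \<rho> = 0"
proof -
  assume "\<Theta> \<noteq> {}"
  then have ne: "\<Theta> \<times> binary_povms \<noteq> {}"
    using binary_povms_nonempty by blast
  show ?thesis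
    by (simp add: rademacher_def cSUP_const[OF ne])
qed

lemma psd_expectation:
  assumes "finite (set_pmf q)" and "\<And>x. x \<in> set_pmf q \<Longrightarrow> psd (f x)"
  shows "psd (measure_pmf.expectation q f)"
  using assms by (subst integral_measure_pmf[of "set_pmf q"]) (auto intro!: psd_sum psd_scaleR)

lemma re_ctrace_msqrt_nonneg: "psd E \<Longrightarrow> 0 \<le> Re (ctrace (msqrt E))"
  by (metis psd_diagonalization re_ctrace_msqrt_unitary_diag real_sqrt_ge_zero sum_nonneg)

text \<open>One half of the variational formula
  \<open>Tr \<surd>E = inf {(Tr B + Tr (B\<^sup>-\<^sup>1 E)) / 2 | B positive definite}\<close>.\<close>
lemma le_re_ctrace_msqrt:
  fixes E :: "'n::finite cmat"
  assumes E: "psd E"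
    and bound: "\<And>V \<beta>. unitary V \<Longrightarrow> (\<And>l. 0 < \<beta> l) \<Longrightarrow>
      X \<le> ((\<Sum>l\<in>UNIV. \<beta> l) + Re (ctrace (V ** diag_mat (\<lambda>l. 1 / \<beta> l) ** cadj V ** E))) / 2"
  shows "X \<le> Re (ctrace (msqrt E))"
proof -
  obtain V lam where V: "unitary V" and lam: "\<And>i. 0 \<le> lam i" and Ed: "E = V ** diag_mat lam ** cadj V"
    using psd_diagonalization[OF E] by metis
  have "X \<le> (\<Sum>i\<in>UNIV. sqrt (lam i)) + e" if "0 < e" for e
  proof -
    define \<beta> where "\<beta> i = sqrt (lam i) + e / CARD('n)" for i
    have \<beta>: "0 < \<beta> i" for i
      unfolding \<beta>_def using that lam by (intro add_nonneg_pos) simp_all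
    have "Re (ctrace (V ** diag_mat (\<lambda>l. 1 / \<beta> l) ** cadj V ** E)) = (\<Sum>i\<in>UNIV. lam i / \<beta> i)"
      using V by (simp add: Ed unitary_diag_conj_mult ctrace_unitary_conj ctrace_diag_mat)
    also have "\<dots> \<le> (\<Sum>i\<in>UNIV. sqrt (lam i))"
    proof (rule sum_mono)
      fix i
      have "lam i \<le> sqrt (lam i) * \<beta> i"
        using lam[of i] that by (simp add: \<beta>_def distrib_left)
      then show "lam i / \<beta> i \<le> sqrt (lam i)"
        using \<beta>[of i] by (simp add: divide_le_eq)
    qed
    finally have R: "Re (ctrace (V ** diag_mat (\<lambda>l. 1 / \<beta> l) ** cadj V ** E)) \<le>
      (\<Sum>i\<in>UNIV. sqrt (lam i))" .
    have "X \<le> ((\<Sum>i\<in>UNIV. \<beta> i) + Re (ctrace (V ** diag_mat (\<lambda>l. 1 / \<beta> l) ** cadj V ** E))) / 2"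
      by (rule bound[OF V \<beta>])
    also have "\<dots> \<le> ((\<Sum>i\<in>UNIV. sqrt (lam i)) + e + (\<Sum>i\<in>UNIV. sqrt (lam i))) / 2"
      using R by (simp add: \<beta>_def sum.distrib)
    also have "\<dots> \<le> (\<Sum>i\<in>UNIV. sqrt (lam i)) + e"
      using that by simp
    finally show ?thesis .
  qed
  then have "X \<le> (\<Sum>i\<in>UNIV. sqrt (lam i))"
    by (rule field_le_epsilon)
  then show ?thesis
    by (simp add: Ed re_ctrace_msqrt_unitary_diag V lam)
qed

lemma cadj_proj0: "cadj (proj0 i0) = proj0 i0"
  by (simp add: vec_eq_iff proj0_def)

lemma ctrace_proj0: "ctrace (proj0 i0) = 1"
  by (simp add: ctrace_def proj0_def)

lemma cadj_kappa: "cadj (kappa i0 S x) = kappa i0 S x"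
  by (simp add: kappa_def cadj_unitary_conj cadj_proj0)

lemma ctrace_kappa: "unitary (S x) \<Longrightarrow> ctrace (kappa i0 S x) = 1"
  by (simp add: kappa_def ctrace_unitary_conj ctrace_proj0)

theorem mainTheorem4:
  fixes N :: nat
    and p :: "(nat \<times> 'x::finite) pmf"
    and \<Theta> :: "(nat \<Rightarrow> 'p) set"
    and L :: nat
    and Ul :: "nat \<Rightarrow> 'p \<Rightarrow> complex ^ 'n::finite ^ 'n"
    and S :: "'x \<Rightarrow> complex ^ 'n ^ 'n"
    and i0 :: 'n
    and \<rho> :: "(nat \<Rightarrow> 'p) \<Rightarrow> 'x \<Rightarrow> complex ^ 'n ^ 'n"
  assumes labels: "set_pmf p \<subseteq> {0, 1} \<times> UNIV"
    and Theta_ne: "\<Theta> \<noteq> {}"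
    and layers_unitary: "\<And>l a. unitary (Ul l a)"
    and S_unitary: "\<And>x. unitary (S x)"
    and rho_def: "\<And>\<theta> x. \<rho> \<theta> x =
        layer_prod L Ul \<theta> ** S x ** proj0 i0 ** cadj (S x) ** cadj (layer_prod L Ul \<theta>)"
  shows "rademacher N p \<Theta> \<rho> \<le>
    Re (ctrace (msqrt (measure_pmf.expectation (map_pmf snd p)
          (\<lambda>x. kappa i0 S x ** kappa i0 S x))))"
proof -
  have fin: "finite (set_pmf p)"
    using labels by (rule finite_subset) simp
  have \<rho>: "\<rho> \<theta> x = layer_prod L Ul \<theta> ** kappa i0 S x ** cadj (layer_prod L Ul \<theta>)" for \<theta> x
    by (simp add: rho_def kappa_def matrix_mul_assoc)
  have psd_E: "psd (measure_pmf.expectation (map_pmf snd p) (\<lambda>x. kappa i0 S x ** kappa i0 S x))"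
    using fin psd_cadj_mult_self[of "kappa i0 S _"] by (intro psd_expectation) (simp_all add: cadj_kappa)
  show ?thesis
  proof (cases "N = 0")
    case True
    then show ?thesis
      using Theta_ne psd_E by (simp add: rademacher_0 re_ctrace_msqrt_nonneg)
  next
    case False
    show ?thesis
      using rademacher_le_regularized_trace[where \<rho> = \<rho> and U = "layer_prod L Ul" and \<kappa> = "kappa i0 S",
          OF fin labels Theta_ne _ unitary_layer_prod[OF layers_unitary] cadj_kappa
          ctrace_kappa[where S = S, OF S_unitary] \<rho>] False
      by (intro le_re_ctrace_msqrt[OF psd_E]) simp
  qed
qed

end
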